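(* Let $n\geq 2$ and $m\in\{1,\ldots,n-1\}$. Let $x_1,\ldots,x_n$ be distinct real numbers and $y_1,\ldots,y_n$ be distinct real numbers, and let $S^{\circ m}=[(1+x_iy_j)^m]_{i,j=1}^n$. Let $D_m$ be the $n\times n$ diagonal matrix with diagonal entries $\binom{m}{0},\binom{m}{1},\ldots,\binom{m}{m},0,\ldots,0$ (i.e. $(D_m)_{kk}=\binom{m}{k-1}$ for $1\leq k\leq m+1$ and $(D_m)_{kk}=0$ for $m+2\leq k\leq n$). Then \[ S^{\circ m}=\Big(L^{\mathbf x(1)}\cdots L^{\mathbf x(n-1)}U^{\mathbf x(n-1)}\cdots U^{\mathbf x(1)}\Big)\,D_m\,\Big(L^{\mathbf y(1)}\cdots L^{\mathbf y(n-1)}U^{\mathbf y(n-1)}\cdots U^{\mathbf y(1)}\Big)^T. \]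
   Context: For distinct real numbers $x_1,\ldots,x_n$ and $1\leq k\leq n-1$, the $n\times n$ lower bidiagonal matrix $L^{\mathbf x(k)}$ and upper bidiagonal matrix $U^{\mathbf x(k)}$ are defined by \[ (L^{\mathbf x(k)})_{ij}=\begin{cases} 1 & \text{if } i=j,\\ 1 & \text{if } i=j+1,\ i=n-k+1,\\ \displaystyle\prod_{t=0}^{k-n+i-2}\frac{x_i-x_{i-1-t}}{x_{i-1}-x_{i-2-t}} & \text{if } i=j+1,\ i>n-k+1,\\ 0 & \text{otherwise}, \end{cases} \] \[ (U^{\mathbf x(k)})_{ij}=\begin{cases} 1 & \text{if } i=j,\ i\leq n-k,\\ x_i-x_{n-k} & \text{if } i=j,\ i>n-k,\\ x_1 & \text{if } i=j-1,\ i=n-k,\\ \displaystyle x_{k-n+i+1}\prod_{t=1}^{k-n+i}\frac{x_i-x_{i-t}}{x_{i+1}-x_{i+1-t}} & \text{if } i=j-1,\ i>n-k,\\ 0 & \text{otherwise}. \end{cases} \] $L^{\mathbf y(k)}$ and $U^{\mathbf y(k)}$ are defined in the same way with $y_1,\ldots,y_n$ in place of $x_1,\ldots,x_n$. $A^T$ denotes the transpose. *)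

theory Defs
  imports "Jordan_Normal_Form.Matrix"
begin

text \<open>The vectors x, y are functions nat => real, used on the
1-based index range {1..n}, as in the paper.  In the definitions below,
i = i0 + 1 and j = j0 + 1 are the paper's 1-based row/column indices.\<close>

definition Lmat :: "nat \<Rightarrow> (nat \<Rightarrow> real) \<Rightarrow> nat \<Rightarrow> real mat" where
  "Lmat n x k = mat n n (\<lambda>(i0, j0).
     let i = i0 + 1; j = j0 + 1 in
     if i = j then 1
     else if i = j + 1 \<and> i = n - k + 1 then 1
     else if i = j + 1 \<and> i > n - k + 1 then
       (\<Prod>t = 0..(k + i) - (n + 2). (x i - x (i - 1 - t)) / (x (i - 1) - x (i - 2 - t)))
     else 0)"

definition Umat :: "nat \<Rightarrow> (nat \<Rightarrow> real) \<Rightarrow> nat \<Rightarrow> real mat" where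
  "Umat n x k = mat n n (\<lambda>(i0, j0).
     let i = i0 + 1; j = j0 + 1 in
     if i = j \<and> i \<le> n - k then 1
     else if i = j \<and> i > n - k then x i - x (n - k)
     else if i + 1 = j \<and> i = n - k then x 1
     else if i + 1 = j \<and> i > n - k then
       x ((k + i + 1) - n) * (\<Prod>t = 1..(k + i) - n. (x i - x (i - t)) / (x (i + 1) - x (i + 1 - t)))
     else 0)"

definition LU_prod :: "nat \<Rightarrow> (nat \<Rightarrow> real) \<Rightarrow> real mat" where
  "LU_prod n x =
     foldr (\<lambda>k M. Lmat n x k * M) [1..<n]
       (foldr (\<lambda>k M. Umat n x k * M) (rev [1..<n]) (1\<^sub>m n))"

definition Spow :: "nat \<Rightarrow> nat \<Rightarrow> (nat \<Rightarrow> real) \<Rightarrow> (nat \<Rightarrow> real) \<Rightarrow> real mat" where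
  "Spow n m x y = mat n n (\<lambda>(i0, j0). (1 + x (i0 + 1) * y (j0 + 1)) ^ m)"

definition Dmat :: "nat \<Rightarrow> nat \<Rightarrow> real mat" where
  "Dmat n m = mat n n (\<lambda>(i0, j0). if i0 = j0 \<and> i0 \<le> m then real (m choose i0) else 0)"

end

theory Submission
  imports Defs
begin

text \<open>Both products in the theorem are Vandermonde matrices, LU_prod n x = [x_i^(j-1)], after which
the claim is the binomial expansion of (1 + x_i y_j)^m. For the Vandermonde factorisation let
p_j(t) = (t - x_1)...(t - x_j). The product of the L factors is the matrix [p_(j-1)(x_i) / p_(j-1)(x_j)]
of the normalised Newton basis, the product of the U factors is the upper triangular matrix
[p_(i-1)(x_i) h_(j-i)(x_1, ..., x_i)] of Newton coefficients of the monomials (h = complete homogeneous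
symmetric polynomial), and their product is [x_i^(j-1)] by the Newton expansion of t^d. Both product
formulas are proved by induction on n: all factors but the last one (k = n - 1) for the nodes
x_1, ..., x_n are 1 \<oplus> (the factor for x_2, ..., x_n), and multiplying by that bidiagonal last factor
is a one-step recurrence for the entries.\<close>

lemma index_mult_mat_sum:
  assumes "A \<in> carrier_mat n k" "B \<in> carrier_mat k m" "i < n" "j < m"
  shows "(A * B) $$ (i,j) = (\<Sum>l<k. A $$ (i,l) * B $$ (l,j))"
  using assms by (auto simp: scalar_prod_def atLeast0LessThan intro!: sum.cong)

lemma sum_lessThan_two_terms:
  fixes f :: "nat \<Rightarrow> 'a::comm_monoid_add"
  assumes "j < n" "\<And>l. l < n \<Longrightarrow> l \<noteq> j \<Longrightarrow> l \<noteq> Suc j \<Longrightarrow> f l = 0"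
  shows "(\<Sum>l<n. f l) = f j + (if Suc j < n then f (Suc j) else 0)"
proof -
  have "(\<Sum>l<n. f l) = (\<Sum>l\<in>{j} \<union> (if Suc j < n then {Suc j} else {}). f l)"
    using assms by (intro sum.mono_neutral_right) auto
  then show ?thesis by auto
qed

lemma index_mult_lower_bidiagonal:
  fixes A B :: "'a::semiring_0 mat"
  assumes "A \<in> carrier_mat m n" "B \<in> carrier_mat n n" "i < m" "j < n"
    and "\<And>l. l < n \<Longrightarrow> l \<noteq> j \<Longrightarrow> l \<noteq> Suc j \<Longrightarrow> B $$ (l,j) = 0"
  shows "(A * B) $$ (i,j) =
    A $$ (i,j) * B $$ (j,j) + (if Suc j < n then A $$ (i,Suc j) * B $$ (Suc j,j) else 0)"
  using assms by (simp add: index_mult_mat_sum[of A m n B n] sum_lessThan_two_terms del: index_mult_mat)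

lemma index_mult_upper_bidiagonal:
  fixes A B :: "'a::semiring_0 mat"
  assumes "A \<in> carrier_mat n n" "B \<in> carrier_mat n m" "i < n" "j < m"
    and "\<And>l. l < n \<Longrightarrow> l \<noteq> i \<Longrightarrow> l \<noteq> Suc i \<Longrightarrow> A $$ (i,l) = 0"
  shows "(A * B) $$ (i,j) =
    A $$ (i,i) * B $$ (i,j) + (if Suc i < n then A $$ (i,Suc i) * B $$ (Suc i,j) else 0)"
  using assms by (simp add: index_mult_mat_sum[of A n n B m] sum_lessThan_two_terms del: index_mult_mat)

definition one_dsum_mat :: "'a::{zero,one} mat \<Rightarrow> 'a mat" where
  "one_dsum_mat A = four_block_mat (1\<^sub>m 1) (0\<^sub>m 1 (dim_col A)) (0\<^sub>m (dim_row A) 1) A"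

lemma dim_one_dsum_mat [simp]:
  "dim_row (one_dsum_mat A) = Suc (dim_row A)" "dim_col (one_dsum_mat A) = Suc (dim_col A)"
  by (simp_all add: one_dsum_mat_def)

lemma index_one_dsum_mat [simp]:
  "one_dsum_mat A $$ (0,0) = 1"
  "j < dim_col A \<Longrightarrow> one_dsum_mat A $$ (0,Suc j) = 0"
  "i < dim_row A \<Longrightarrow> one_dsum_mat A $$ (Suc i,0) = 0"
  "i < dim_row A \<Longrightarrow> j < dim_col A \<Longrightarrow> one_dsum_mat A $$ (Suc i,Suc j) = A $$ (i,j)"
  by (auto simp: one_dsum_mat_def)

lemma one_dsum_mat_mult:
  fixes A B :: "'a::semiring_1 mat"
  assumes "A \<in> carrier_mat n n" "B \<in> carrier_mat n n"
  shows "one_dsum_mat (A * B) = one_dsum_mat A * one_dsum_mat B"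
proof -
  have one: "1\<^sub>m 1 \<in> carrier_mat 1 1" by simp
  show ?thesis
    using assms unfolding one_dsum_mat_def
    by (subst mult_four_block_mat[OF one _ _ assms(1) one _ _ assms(2)]) auto
qed

lemma one_dsum_mat_one [simp]: "one_dsum_mat (1\<^sub>m n) = 1\<^sub>m (Suc n)"
  using four_block_one_mat[of 1 n] by (simp add: one_dsum_mat_def)

lemma foldr_mult_carrier_mat:
  assumes "\<And>k. k \<in> set ks \<Longrightarrow> A k \<in> carrier_mat n n" "B \<in> carrier_mat n n"
  shows "foldr (\<lambda>k M. A k * M) ks B \<in> carrier_mat n n"
  using assms by (induction ks) (auto intro!: mult_carrier_mat)

lemma foldr_mult_mat_right:
  fixes A :: "'b \<Rightarrow> 'a::semiring_1 mat"
  assumes "\<And>k. k \<in> set ks \<Longrightarrow> A k \<in> carrier_mat n n" "B \<in> carrier_mat n n"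
  shows "foldr (\<lambda>k M. A k * M) ks B = foldr (\<lambda>k M. A k * M) ks (1\<^sub>m n) * B"
  using assms
proof (induction ks)
  case (Cons a ks)
  have "foldr (\<lambda>k M. A k * M) ks (1\<^sub>m n) \<in> carrier_mat n n"
    using Cons.prems by (intro foldr_mult_carrier_mat) auto
  with Cons show ?case by (simp add: assoc_mult_mat[of _ n n _ n _ n])
qed simp

lemma foldr_mult_one_dsum_mat:
  fixes A :: "'b \<Rightarrow> 'a::semiring_1 mat"
  assumes "\<And>k. k \<in> set ks \<Longrightarrow> A k \<in> carrier_mat n n" "B \<in> carrier_mat n n"
  shows "foldr (\<lambda>k M. one_dsum_mat (A k) * M) ks (one_dsum_mat B) =
    one_dsum_mat (foldr (\<lambda>k M. A k * M) ks B)"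
  using assms
proof (induction ks)
  case (Cons a ks)
  have "foldr (\<lambda>k M. A k * M) ks B \<in> carrier_mat n n"
    using Cons.prems by (intro foldr_mult_carrier_mat) auto
  with Cons show ?case by (simp add: one_dsum_mat_mult[of "A a" n])
qed simp

definition newton_poly :: "(nat \<Rightarrow> 'a::comm_ring_1) \<Rightarrow> nat \<Rightarrow> 'a \<Rightarrow> 'a" where
  "newton_poly x j t = (\<Prod>s=1..j. t - x s)"

lemma newton_poly_0 [simp]: "newton_poly x 0 t = 1"
  by (simp add: newton_poly_def)

lemma newton_poly_Suc: "newton_poly x (Suc j) t = newton_poly x j t * (t - x (Suc j))"
  by (simp add: newton_poly_def)

lemma newton_poly_Suc_shift: "newton_poly x (Suc j) t = (t - x 1) * newton_poly (x \<circ> Suc) j t"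
  unfolding newton_poly_def
  by (simp only: prod.atLeast_Suc_atMost[of 1 "Suc j"] prod.shift_bounds_cl_Suc_ivl) simp_all

lemma newton_poly_node_eq_0: "1 \<le> k \<Longrightarrow> k \<le> j \<Longrightarrow> newton_poly x j (x k) = 0"
  unfolding newton_poly_def by (rule prod_zero) auto

lemma newton_poly_node_neq_0:
  fixes x :: "nat \<Rightarrow> 'a::idom"
  assumes "inj_on x {1..n}" "j < k" "k \<le> n"
  shows "newton_poly x j (x k) \<noteq> 0"
  using assms unfolding newton_poly_def by (auto dest: inj_onD)

text \<open>complete_hom z d l is the complete homogeneous symmetric polynomial h_d(z_1, ..., z_l).\<close>
fun complete_hom :: "(nat \<Rightarrow> 'a::comm_semiring_1) \<Rightarrow> nat \<Rightarrow> nat \<Rightarrow> 'a" where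
  "complete_hom z 0 l = 1"
| "complete_hom z (Suc d) 0 = 0"
| "complete_hom z (Suc d) (Suc l) = complete_hom z (Suc d) l + z (Suc l) * complete_hom z d (Suc l)"

lemma newton_expansion_power:
  fixes z :: "nat \<Rightarrow> 'a::comm_ring_1"
  shows "t ^ d = (\<Sum>l\<le>d. newton_poly z l t * complete_hom z (d - l) (Suc l))"
proof (induction d)
  case (Suc d)
  let ?p = "\<lambda>l. newton_poly z l t" and ?h = "complete_hom z"
  have shifted: "(\<Sum>l\<le>d. ?p (Suc l) * ?h (d - l) (Suc l)) =
      (\<Sum>l\<le>d. ?p l * ?h (Suc d - l) l) + ?p (Suc d)"
  proof (cases d)
    case (Suc d')
    have "(\<Sum>l\<le>d. ?p l * ?h (Suc d - l) l) = (\<Sum>l\<le>d'. ?p (Suc l) * ?h (d - l) (Suc l))"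
      unfolding Suc by (subst sum.atMost_Suc_shift) (simp add: Suc_diff_le)
    then show ?thesis by (simp add: Suc)
  qed simp
  have step: "t * ?p l * c = ?p (Suc l) * c + z (Suc l) * ?p l * c" for l c
    by (simp add: newton_poly_Suc algebra_simps)
  have "t ^ Suc d = (\<Sum>l\<le>d. t * ?p l * ?h (d - l) (Suc l))"
    by (simp add: Suc sum_distrib_left mult.assoc)
  also have "\<dots> = (\<Sum>l\<le>d. ?p (Suc l) * ?h (d - l) (Suc l)) +
      (\<Sum>l\<le>d. z (Suc l) * ?p l * ?h (d - l) (Suc l))"
    by (simp only: step sum.distrib)
  also have "\<dots> = (\<Sum>l\<le>d. ?p l * (?h (Suc d - l) l + z (Suc l) * ?h (d - l) (Suc l))) + ?p (Suc d)"
    by (simp add: shifted algebra_simps sum.distrib)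
  also have "\<dots> = (\<Sum>l\<le>Suc d. ?p l * ?h (Suc d - l) (Suc l))"
    by (simp add: Suc_diff_le)
  finally show ?case .
qed simp

lemma Lmat_carrier [simp]: "Lmat n x k \<in> carrier_mat n n"
  by (simp add: Lmat_def)

lemma Lmat_Suc_shift:
  assumes "1 \<le> k" "k < n"
  shows "Lmat (Suc n) x k = one_dsum_mat (Lmat n (x \<circ> Suc) k)"
proof (rule eq_matI)
  fix i j assume "i < dim_row (one_dsum_mat (Lmat n (x \<circ> Suc) k))"
    "j < dim_col (one_dsum_mat (Lmat n (x \<circ> Suc) k))"
  then have ij: "i < Suc n" "j < Suc n" by (auto simp: Lmat_def)
  show "Lmat (Suc n) x k $$ (i, j) = one_dsum_mat (Lmat n (x \<circ> Suc) k) $$ (i, j)"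
  proof (cases i; cases j)
    fix i' j' assume ij': "i = Suc i'" "j = Suc j'"
    let ?q = "\<lambda>x i t. (x i - x (i - 1 - t)) / (x (i - 1) - x (i - 2 - t))"
    have "(\<Prod>t = 0..k + Suc i - (Suc n + 2). ?q x (Suc i) t) =
        (\<Prod>t = 0..k + i - (n + 2). ?q (x \<circ> Suc) i t)" if "i > n - k + 1"
      using that assms by (intro prod.cong) (auto simp: Suc_diff_Suc)
    then show ?thesis using ij ij' assms by (auto simp: Lmat_def Let_def)
  qed (use ij assms in \<open>auto simp: Lmat_def Let_def\<close>)
qed (auto simp: Lmat_def)

lemma index_Lmat_last:
  assumes "i < Suc n" "j < Suc n"
  shows "Lmat (Suc n) x n $$ (i,j) = (if i = j then 1 else if i = Suc j
    then newton_poly (x \<circ> Suc) j (x (j + 2)) / newton_poly x j (x (j + 1)) else 0)"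
proof -
  let ?q = "\<lambda>i t. (x i - x (i - 1 - t)) / (x (i - 1) - x (i - 2 - t))"
  have "(\<Prod>t = 0..n + (j + 2) - (Suc n + 2). ?q (j + 2) t) =
      (\<Prod>s = 1..j. (x (j + 2) - x (s + 1)) / (x (j + 1) - x s))" if "j \<ge> 1"
    using that by (intro prod.reindex_bij_witness[where i="\<lambda>s. j - s" and j="\<lambda>t. j - t"])
      (auto simp: Suc_diff_le)
  then show ?thesis
    using assms by (auto simp: Lmat_def Let_def newton_poly_def prod_dividef)
qed

text \<open>Umat with the superdiagonal weights x_1 and x_(k-n+i+1) taken from a second sequence z:
deleting the first node shifts the sequence in the differences but not the one in these weights.\<close>
definition Umat_gen :: "nat \<Rightarrow> (nat \<Rightarrow> real) \<Rightarrow> (nat \<Rightarrow> real) \<Rightarrow> nat \<Rightarrow> real mat" where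
  "Umat_gen n x z k = mat n n (\<lambda>(i0, j0).
     let i = i0 + 1; j = j0 + 1 in
     if i = j \<and> i \<le> n - k then 1
     else if i = j \<and> i > n - k then x i - x (n - k)
     else if i + 1 = j \<and> i = n - k then z 1
     else if i + 1 = j \<and> i > n - k then
       z ((k + i + 1) - n) * (\<Prod>t = 1..(k + i) - n. (x i - x (i - t)) / (x (i + 1) - x (i + 1 - t)))
     else 0)"

lemma Umat_eq_Umat_gen: "Umat n x k = Umat_gen n x x k"
  by (simp add: Umat_def Umat_gen_def)

lemma Umat_gen_carrier [simp]: "Umat_gen n x z k \<in> carrier_mat n n"
  by (simp add: Umat_gen_def)

lemma Umat_gen_Suc_shift:
  assumes "1 \<le> k" "k < n"
  shows "Umat_gen (Suc n) x z k = one_dsum_mat (Umat_gen n (x \<circ> Suc) z k)"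
proof (rule eq_matI)
  fix i j assume "i < dim_row (one_dsum_mat (Umat_gen n (x \<circ> Suc) z k))"
    "j < dim_col (one_dsum_mat (Umat_gen n (x \<circ> Suc) z k))"
  then have ij: "i < Suc n" "j < Suc n" by (auto simp: Umat_gen_def)
  show "Umat_gen (Suc n) x z k $$ (i, j) = one_dsum_mat (Umat_gen n (x \<circ> Suc) z k) $$ (i, j)"
  proof (cases i; cases j)
    fix i' j' assume ij': "i = Suc i'" "j = Suc j'"
    let ?q = "\<lambda>x i t. (x i - x (i - t)) / (x (i + 1) - x (i + 1 - t))"
    have "(\<Prod>t = 1..k + Suc i - Suc n. ?q x (Suc i) t) = (\<Prod>t = 1..k + i - n. ?q (x \<circ> Suc) i t)"
      if "i > n - k"
      using that assms by (intro prod.cong) (auto simp: Suc_diff_le)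
    then show ?thesis using ij ij' assms by (auto simp: Umat_gen_def Let_def Suc_diff_le)
  qed (use ij assms in \<open>auto simp: Umat_gen_def Let_def\<close>)
qed (auto simp: Umat_gen_def)

lemma index_Umat_gen_last:
  assumes "i < Suc n" "j < Suc n"
  shows "Umat_gen (Suc n) x z n $$ (i,j) = (if i = j then (if i = 0 then 1 else x (i + 1) - x 1)
    else if j = Suc i
    then z (i + 1) * newton_poly x i (x (i + 1)) / newton_poly (x \<circ> Suc) i (x (i + 2)) else 0)"
proof -
  let ?q = "\<lambda>i t. (x i - x (i - t)) / (x (i + 1) - x (i + 1 - t))"
  have "(\<Prod>t = 1..n + (i + 1) - Suc n. ?q (i + 1) t) =
      (\<Prod>s = 1..i. (x (i + 1) - x s) / (x (i + 2) - x (s + 1)))"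
    by (intro prod.reindex_bij_witness[where i="\<lambda>s. i + 1 - s" and j="\<lambda>t. i + 1 - t"])
      (auto simp: Suc_diff_le)
  then show ?thesis
    using assms by (auto simp: Umat_gen_def Let_def newton_poly_def prod_dividef)
qed

definition Lprod :: "nat \<Rightarrow> (nat \<Rightarrow> real) \<Rightarrow> real mat" where
  "Lprod n x = foldr (\<lambda>k M. Lmat n x k * M) [1..<n] (1\<^sub>m n)"

definition Uprod :: "nat \<Rightarrow> (nat \<Rightarrow> real) \<Rightarrow> (nat \<Rightarrow> real) \<Rightarrow> real mat" where
  "Uprod n x z = foldr (\<lambda>k M. Umat_gen n x z k * M) (rev [1..<n]) (1\<^sub>m n)"

lemma LU_prod_eq_Lprod_Uprod: "LU_prod n x = Lprod n x * Uprod n x x"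
proof -
  have "Uprod n x x \<in> carrier_mat n n"
    unfolding Uprod_def by (rule foldr_mult_carrier_mat) auto
  then show ?thesis
    unfolding LU_prod_def Lprod_def Umat_eq_Umat_gen Uprod_def[symmetric]
    by (rule foldr_mult_mat_right[rotated]) auto
qed

lemma Lprod_Suc:
  assumes "1 \<le> n"
  shows "Lprod (Suc n) x = one_dsum_mat (Lprod n (x \<circ> Suc)) * Lmat (Suc n) x n"
proof -
  have "Lprod (Suc n) x = foldr (\<lambda>k M. Lmat (Suc n) x k * M) [1..<n] (Lmat (Suc n) x n)"
    using assms by (simp add: Lprod_def right_mult_one_mat[of _ "Suc n" "Suc n"])
  also have "\<dots> = foldr (\<lambda>k M. Lmat (Suc n) x k * M) [1..<n] (one_dsum_mat (1\<^sub>m n)) * Lmat (Suc n) x n"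
    by (subst foldr_mult_mat_right[of _ _ "Suc n"]) auto
  also have "foldr (\<lambda>k M. Lmat (Suc n) x k * M) [1..<n] (one_dsum_mat (1\<^sub>m n)) =
      one_dsum_mat (Lprod n (x \<circ> Suc))"
    unfolding Lprod_def
    by (subst foldr_mult_one_dsum_mat[symmetric]) (auto simp: Lmat_Suc_shift intro!: foldr_cong)
  finally show ?thesis .
qed

lemma Uprod_Suc:
  assumes "1 \<le> n"
  shows "Uprod (Suc n) x z = Umat_gen (Suc n) x z n * one_dsum_mat (Uprod n (x \<circ> Suc) z)"
proof -
  have "Uprod (Suc n) x z =
      Umat_gen (Suc n) x z n * foldr (\<lambda>k M. Umat_gen (Suc n) x z k * M) (rev [1..<n]) (one_dsum_mat (1\<^sub>m n))"
    using assms by (simp add: Uprod_def)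
  also have "foldr (\<lambda>k M. Umat_gen (Suc n) x z k * M) (rev [1..<n]) (one_dsum_mat (1\<^sub>m n)) =
      one_dsum_mat (Uprod n (x \<circ> Suc) z)"
    unfolding Uprod_def
    by (subst foldr_mult_one_dsum_mat[symmetric]) (auto simp: Umat_gen_Suc_shift intro!: foldr_cong)
  finally show ?thesis .
qed

lemma inj_on_comp_Suc: "inj_on x {1..Suc n} \<Longrightarrow> inj_on (x \<circ> Suc) {1..n}"
  by (rule comp_inj_on) (auto elim: inj_on_subset)

lemma newton_poly_divide_step:
  fixes x :: "nat \<Rightarrow> 'a::field"
  assumes "x (j + 2) \<noteq> x 1" "newton_poly (x \<circ> Suc) j (x (j + 2)) \<noteq> 0"
  shows "newton_poly (x \<circ> Suc) j t / newton_poly (x \<circ> Suc) j (x (j + 2)) +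
      newton_poly (x \<circ> Suc) (Suc j) t / newton_poly x (Suc j) (x (j + 2)) =
    newton_poly x (Suc j) t / newton_poly x (Suc j) (x (j + 2))"
  using assms
  by (simp add: newton_poly_Suc_shift[of x j] newton_poly_Suc[of "x \<circ> Suc" j] eval_nat_numeral
      field_simps)

definition newton_basis_mat :: "nat \<Rightarrow> (nat \<Rightarrow> 'a::field) \<Rightarrow> 'a mat" where
  "newton_basis_mat n x =
     mat n n (\<lambda>(i,j). newton_poly x j (x (Suc i)) / newton_poly x j (x (Suc j)))"

lemma newton_basis_mat_unitriangular:
  fixes x :: "nat \<Rightarrow> 'a::field"
  assumes "inj_on x {1..n}" "i \<le> j" "j < n"
  shows "newton_basis_mat n x $$ (i,j) = (if i = j then 1 else 0)"
  using assms newton_poly_node_eq_0[of "Suc i" j x] newton_poly_node_neq_0[OF assms(1), of j "Suc j"]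
  by (auto simp: newton_basis_mat_def)

lemma newton_basis_mat_Suc_Suc:
  fixes x :: "nat \<Rightarrow> 'a::field"
  assumes inj: "inj_on x {1..Suc n}" and "i < n" "j < n"
  shows "newton_basis_mat (Suc n) x $$ (Suc i, Suc j) = newton_basis_mat n (x \<circ> Suc) $$ (i,j) +
    (if Suc j < n then newton_basis_mat n (x \<circ> Suc) $$ (i, Suc j) *
      (newton_poly (x \<circ> Suc) (Suc j) (x (j + 3)) / newton_poly x (Suc j) (x (j + 2))) else 0)"
proof (cases "Suc j < n")
  case True
  have "newton_poly (x \<circ> Suc) (Suc j) (x (j + 3)) \<noteq> 0"
    using True newton_poly_node_neq_0[OF inj_on_comp_Suc[OF inj], of "Suc j" "Suc (Suc j)"]
    by (simp add: eval_nat_numeral)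
  moreover have "x (j + 2) \<noteq> x 1"
    using \<open>j < n\<close> inj by (auto dest: inj_onD)
  moreover have "newton_poly (x \<circ> Suc) j (x (j + 2)) \<noteq> 0"
    using \<open>j < n\<close> newton_poly_node_neq_0[OF inj_on_comp_Suc[OF inj], of j "Suc j"] by simp
  ultimately show ?thesis
    using True \<open>i < n\<close> newton_poly_divide_step[of x j "x (i + 2)"]
    by (simp add: newton_basis_mat_def eval_nat_numeral)
next
  case False
  then have "i \<le> j" using \<open>i < n\<close> \<open>j < n\<close> by simp
  then show ?thesis
    using False \<open>j < n\<close> inj newton_basis_mat_unitriangular[OF inj_on_comp_Suc[OF inj]]
    by (simp add: newton_basis_mat_unitriangular)
qed

lemma newton_basis_mat_Suc:
  fixes x :: "nat \<Rightarrow> real"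
  assumes inj: "inj_on x {1..Suc n}" and "1 \<le> n"
  shows "one_dsum_mat (newton_basis_mat n (x \<circ> Suc)) * Lmat (Suc n) x n = newton_basis_mat (Suc n) x"
proof (rule eq_matI)
  fix i j assume "i < dim_row (newton_basis_mat (Suc n) x)" "j < dim_col (newton_basis_mat (Suc n) x)"
  then have ij: "i < Suc n" "j < Suc n" by (auto simp: newton_basis_mat_def)
  let ?D = "one_dsum_mat (newton_basis_mat n (x \<circ> Suc))"
  have "(?D * Lmat (Suc n) x n) $$ (i,j) = ?D $$ (i,j) + (if Suc j < Suc n then ?D $$ (i,Suc j) *
      (newton_poly (x \<circ> Suc) j (x (j + 2)) / newton_poly x j (x (j + 1))) else 0)"
    using ij by (subst index_mult_lower_bidiagonal[of _ "Suc n" "Suc n"])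
      (auto simp: index_Lmat_last newton_basis_mat_def)
  also have "\<dots> = newton_basis_mat (Suc n) x $$ (i,j)"
    using ij \<open>1 \<le> n\<close>
    by (cases i; cases j) (auto simp: newton_basis_mat_unitriangular[OF inj] newton_basis_mat_Suc_Suc[OF inj]
        eval_nat_numeral, auto simp: newton_basis_mat_def)
  finally show "(?D * Lmat (Suc n) x n) $$ (i,j) = newton_basis_mat (Suc n) x $$ (i,j)" .
qed (auto simp: newton_basis_mat_def Lmat_def)

definition newton_coeff_mat :: "nat \<Rightarrow> (nat \<Rightarrow> 'a::comm_ring_1) \<Rightarrow> (nat \<Rightarrow> 'a) \<Rightarrow> 'a mat" where
  "newton_coeff_mat n x z = mat n n (\<lambda>(i,j).
     if i \<le> j then newton_poly x i (x (Suc i)) * complete_hom z (j - i) (Suc i) else 0)"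

lemma complete_hom_Suc_vars:
  "complete_hom z d (Suc l) =
    complete_hom z d l + (if d = 0 then 0 else z (Suc l) * complete_hom z (d - 1) (Suc l))"
  by (cases d) simp_all

lemma newton_coeff_mat_Suc_Suc:
  fixes x z :: "nat \<Rightarrow> 'a::field"
  assumes inj: "inj_on x {1..Suc n}" and "i < n" "j < n"
  shows "newton_coeff_mat (Suc n) x z $$ (Suc i, Suc j) =
    (x (i + 2) - x 1) * newton_coeff_mat n (x \<circ> Suc) z $$ (i,j) +
    (if Suc i < n then z (i + 2) * newton_poly x (Suc i) (x (i + 2)) /
      newton_poly (x \<circ> Suc) (Suc i) (x (i + 3)) * newton_coeff_mat n (x \<circ> Suc) z $$ (Suc i, j) else 0)"
proof -
  let ?P = "newton_poly x (Suc i) (x (i + 2))"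
  have diagonal: "(x (i + 2) - x 1) * newton_coeff_mat n (x \<circ> Suc) z $$ (i,j) =
      (if i \<le> j then ?P * complete_hom z (j - i) (i + 1) else 0)"
    using assms by (simp add: newton_coeff_mat_def newton_poly_Suc_shift numeral_2_eq_2)
  have superdiagonal: "(if Suc i < n then z (i + 2) * ?P / newton_poly (x \<circ> Suc) (Suc i) (x (i + 3)) *
      newton_coeff_mat n (x \<circ> Suc) z $$ (Suc i, j) else 0) =
    (if i < j then ?P * (z (i + 2) * complete_hom z (j - Suc i) (i + 2)) else 0)"
  proof (cases "Suc i < n")
    case True
    have "newton_poly (x \<circ> Suc) (Suc i) (x (i + 3)) \<noteq> 0"
      using True newton_poly_node_neq_0[OF inj_on_comp_Suc[OF inj], of "Suc i" "Suc (Suc i)"]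
      by (simp add: eval_nat_numeral)
    then show ?thesis
      using True assms by (simp add: newton_coeff_mat_def eval_nat_numeral)
  qed (use assms in simp)
  show ?thesis
    using assms diagonal superdiagonal
    by (auto simp: newton_coeff_mat_def complete_hom_Suc_vars[of z "j - i" "Suc i"] algebra_simps
        numeral_2_eq_2)
qed

lemma newton_coeff_mat_Suc:
  fixes x z :: "nat \<Rightarrow> real"
  assumes inj: "inj_on x {1..Suc n}" and "1 \<le> n"
  shows "Umat_gen (Suc n) x z n * one_dsum_mat (newton_coeff_mat n (x \<circ> Suc) z) =
    newton_coeff_mat (Suc n) x z"
proof (rule eq_matI)
  fix i j assume "i < dim_row (newton_coeff_mat (Suc n) x z)" "j < dim_col (newton_coeff_mat (Suc n) x z)"
  then have ij: "i < Suc n" "j < Suc n" by (auto simp: newton_coeff_mat_def)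
  let ?D = "one_dsum_mat (newton_coeff_mat n (x \<circ> Suc) z)"
  have "(Umat_gen (Suc n) x z n * ?D) $$ (i,j) = (if i = 0 then 1 else x (i + 1) - x 1) * ?D $$ (i,j) +
      (if Suc i < Suc n then z (i + 1) * newton_poly x i (x (i + 1)) /
        newton_poly (x \<circ> Suc) i (x (i + 2)) * ?D $$ (Suc i,j) else 0)"
    using ij by (subst index_mult_upper_bidiagonal[of _ "Suc n" _ "Suc n"])
      (auto simp: index_Umat_gen_last newton_coeff_mat_def)
  also have "\<dots> = newton_coeff_mat (Suc n) x z $$ (i,j)"
    using ij \<open>1 \<le> n\<close>
    by (cases i; cases j) (auto simp: newton_coeff_mat_Suc_Suc[OF inj] eval_nat_numeral,
        auto simp: newton_coeff_mat_def)
  finally show "(Umat_gen (Suc n) x z n * ?D) $$ (i,j) = newton_coeff_mat (Suc n) x z $$ (i,j)" .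
qed (auto simp: newton_coeff_mat_def Umat_gen_def)

lemma Lprod_eq_newton_basis_mat: "inj_on x {1..n} \<Longrightarrow> Lprod n x = newton_basis_mat n x"
proof (induction n arbitrary: x)
  case (Suc n)
  show ?case
  proof (cases "n = 0")
    case False
    then have "1 \<le> n" by simp
    then have "Lprod (Suc n) x = one_dsum_mat (Lprod n (x \<circ> Suc)) * Lmat (Suc n) x n"
      by (rule Lprod_Suc)
    also have "\<dots> = one_dsum_mat (newton_basis_mat n (x \<circ> Suc)) * Lmat (Suc n) x n"
      by (simp only: Suc.IH[OF inj_on_comp_Suc[OF Suc.prems]])
    also have "\<dots> = newton_basis_mat (Suc n) x"
      by (rule newton_basis_mat_Suc) fact+
    finally show ?thesis .
  qed (auto intro!: eq_matI simp: Lprod_def newton_basis_mat_def)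
qed (auto intro!: eq_matI simp: Lprod_def newton_basis_mat_def)

lemma Uprod_eq_newton_coeff_mat: "inj_on x {1..n} \<Longrightarrow> Uprod n x z = newton_coeff_mat n x z"
proof (induction n arbitrary: x)
  case (Suc n)
  show ?case
  proof (cases "n = 0")
    case False
    then have "1 \<le> n" by simp
    then have "Uprod (Suc n) x z = Umat_gen (Suc n) x z n * one_dsum_mat (Uprod n (x \<circ> Suc) z)"
      by (rule Uprod_Suc)
    also have "\<dots> = Umat_gen (Suc n) x z n * one_dsum_mat (newton_coeff_mat n (x \<circ> Suc) z)"
      by (simp only: Suc.IH[OF inj_on_comp_Suc[OF Suc.prems]])
    also have "\<dots> = newton_coeff_mat (Suc n) x z"
      by (rule newton_coeff_mat_Suc) fact+
    finally show ?thesis .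
  qed (auto intro!: eq_matI simp: Uprod_def newton_coeff_mat_def)
qed (auto intro!: eq_matI simp: Uprod_def newton_coeff_mat_def)

definition vandermonde_mat :: "nat \<Rightarrow> (nat \<Rightarrow> 'a::comm_ring_1) \<Rightarrow> 'a mat" where
  "vandermonde_mat n x = mat n n (\<lambda>(i,j). x (Suc i) ^ j)"

lemma newton_basis_mat_mult_newton_coeff_mat:
  fixes x :: "nat \<Rightarrow> 'a::field"
  assumes inj: "inj_on x {1..n}"
  shows "newton_basis_mat n x * newton_coeff_mat n x x = vandermonde_mat n x"
proof (rule eq_matI)
  fix i j assume "i < dim_row (vandermonde_mat n x)" "j < dim_col (vandermonde_mat n x)"
  then have ij: "i < n" "j < n" by (auto simp: vandermonde_mat_def)
  let ?t = "x (Suc i)"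
  have "(newton_basis_mat n x * newton_coeff_mat n x x) $$ (i,j) =
      (\<Sum>l<n. newton_basis_mat n x $$ (i,l) * newton_coeff_mat n x x $$ (l,j))"
    using ij by (intro index_mult_mat_sum) (auto simp: newton_basis_mat_def newton_coeff_mat_def)
  also have "\<dots> = (\<Sum>l<n. if l \<le> j then newton_poly x l ?t * complete_hom x (j - l) (Suc l) else 0)"
  proof (intro sum.cong refl)
    fix l assume "l \<in> {..<n}"
    then have "newton_poly x l (x (Suc l)) \<noteq> 0"
      by (intro newton_poly_node_neq_0[OF inj]) auto
    then show "newton_basis_mat n x $$ (i,l) * newton_coeff_mat n x x $$ (l,j) =
        (if l \<le> j then newton_poly x l ?t * complete_hom x (j - l) (Suc l) else 0)"
      using ij \<open>l \<in> {..<n}\<close> by (simp add: newton_basis_mat_def newton_coeff_mat_def)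
  qed
  also have "\<dots> = (\<Sum>l\<le>j. newton_poly x l ?t * complete_hom x (j - l) (Suc l))"
    using ij by (intro sum.mono_neutral_cong_right) auto
  also have "\<dots> = vandermonde_mat n x $$ (i,j)"
    using ij by (simp add: vandermonde_mat_def newton_expansion_power[symmetric])
  finally show "(newton_basis_mat n x * newton_coeff_mat n x x) $$ (i,j) =
      vandermonde_mat n x $$ (i,j)" .
qed (auto simp: newton_basis_mat_def newton_coeff_mat_def vandermonde_mat_def)

lemma LU_prod_eq_vandermonde_mat: "inj_on x {1..n} \<Longrightarrow> LU_prod n x = vandermonde_mat n x"
  by (simp add: LU_prod_eq_Lprod_Uprod Lprod_eq_newton_basis_mat Uprod_eq_newton_coeff_mat
      newton_basis_mat_mult_newton_coeff_mat)

lemma Spow_eq_vandermonde_Dmat: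
  assumes "m < n"
  shows "Spow n m x y = vandermonde_mat n x * Dmat n m * transpose_mat (vandermonde_mat n y)"
proof (rule eq_matI)
  fix i j assume "i < dim_row (vandermonde_mat n x * Dmat n m * transpose_mat (vandermonde_mat n y))"
    "j < dim_col (vandermonde_mat n x * Dmat n m * transpose_mat (vandermonde_mat n y))"
  then have ij: "i < n" "j < n" by (auto simp: vandermonde_mat_def)
  have VD: "(vandermonde_mat n x * Dmat n m) $$ (i,k) =
      (if k \<le> m then real (m choose k) * x (Suc i) ^ k else 0)" if "k < n" for k
    using ij that by (subst index_mult_lower_bidiagonal[of _ n n])
      (auto simp: vandermonde_mat_def Dmat_def)
  have "(vandermonde_mat n x * Dmat n m * transpose_mat (vandermonde_mat n y)) $$ (i,j) =
      (\<Sum>k<n. (vandermonde_mat n x * Dmat n m) $$ (i,k) * transpose_mat (vandermonde_mat n y) $$ (k,j))"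
    using ij by (intro index_mult_mat_sum) (auto simp: vandermonde_mat_def Dmat_def)
  also have "\<dots> = (\<Sum>k<n. if k \<le> m then real (m choose k) * (x (Suc i) * y (Suc j)) ^ k else 0)"
    using ij by (intro sum.cong refl, subst VD) (auto simp: vandermonde_mat_def power_mult_distrib)
  also have "\<dots> = (\<Sum>k\<le>m. real (m choose k) * (x (Suc i) * y (Suc j)) ^ k)"
    using assms by (intro sum.mono_neutral_cong_right) auto
  also have "\<dots> = (x (Suc i) * y (Suc j) + 1) ^ m"
    by (simp add: binomial_ring)
  also have "\<dots> = Spow n m x y $$ (i,j)"
    using ij by (simp add: Spow_def add.commute)
  finally show "Spow n m x y $$ (i,j) =
      (vandermonde_mat n x * Dmat n m * transpose_mat (vandermonde_mat n y)) $$ (i,j)" ..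
qed (auto simp: Spow_def vandermonde_mat_def)

theorem theorem2p4:
  fixes n m :: nat and x y :: "nat \<Rightarrow> real"
  assumes "n \<ge> 2" and "1 \<le> m" and "m \<le> n - 1"
    and "inj_on x {1..n}" and "inj_on y {1..n}"
  shows "Spow n m x y = LU_prod n x * Dmat n m * transpose_mat (LU_prod n y)"
  using assms by (simp add: LU_prod_eq_vandermonde_mat Spow_eq_vandermonde_Dmat)

end
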